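(* Let $\varphi_4\neq0$ and let $\Phi(\theta)=\dfrac{\varphi_3^2+2\varphi_4(r(\theta)\sin\theta-\varphi_2)}{r^4(\theta)}$. Suppose $\Theta_1<\Theta_2$ are such that $\Phi>0$ on $(\Theta_1,\Theta_2)$ and $\Phi(\Theta_1)=\Phi(\Theta_2)=0$, and let $\theta(t)$, $t\in\mathbb R$, be the angle function of a normal extremal ($M=1$) starting at the identity. Then, with $u_1(\theta)=\frac{r'(\theta)\sin\theta+r(\theta)\cos\theta}{r^2(\theta)}$, one has $\varphi_4u_1(\theta)>0$ for $\theta\in(\Theta_1,\Theta_2)$ sufficiently close to $\Theta_1$, and $\varphi_4u_1(\theta)<0$ for $\theta\in(\Theta_1,\Theta_2)$ sufficiently close to $\Theta_2$. Consequently, if $\theta(t_0)=\Theta_1$ (resp. $\theta(t_0)=\Theta_2$) and $\theta(t)\neq\Theta_1$ (resp. $\theta(t)\ne\Theta_2$) for all $t<t_0$, or for all $t>t_0$, sufficiently close to $t_0$, then $\dot\theta(t)(t-t_0)>0$ (resp. $\dot\theta(t)(t-t_0)<0$) for these $t$.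
   Context: Let $\mathfrak g$ be the Engel algebra with basis $X,Y,Z,V$, $[X,Y]=Z$, $[X,Z]=V$, all other brackets of basis elements zero; $G$ the corresponding connected simply connected Lie group, with coordinates of the first kind $(x,y,z,v)$ (identity $=0$). Let $F$ be an arbitrary norm on $\mathbb R^2$, $U=\{u:F(u)\le1\}$, $(u_1,u_2)\leftrightarrow u_1X(e)+u_2Y(e)$. The control system is $\dot x=u_1,\ \dot y=u_2,\ \dot z=\tfrac12(xu_2-yu_1),\ \dot v=-\tfrac12(z+\tfrac16xy)u_1+\tfrac1{12}x^2u_2$, measurable $u(t)\in U$, $x(0)=y(0)=z(0)=v(0)=0$. An extremal is a trajectory with control $u(t)$ for which there is a nowhere vanishing absolutely continuous $\psi=(\psi_1,\dots,\psi_4)$ with a.e. $\dot\psi_1=\tfrac1{12}\psi_4yu_1-(\tfrac12\psi_3+\tfrac16\psi_4x)u_2$, $\dot\psi_2=(\tfrac12\psi_3+\tfrac1{12}\psi_4x)u_1$, $\dot\psi_3=\tfrac12\psi_4u_1$, $\dot\psi_4=0$ and $h_1u_1(t)+h_2u_2(t)=\max_{u\in U}(h_1u_1+h_2u_2)=M$ a.e., with $h_1=\psi_1-\tfrac12\psi_3y-\tfrac1{12}\psi_4xy-\tfrac12\psi_4z$, $h_2=\psi_2+\tfrac12\psi_3x+\tfrac1{12}\psi_4x^2$, $M\ge0$ constant; normal means $M>0$, normalized to $M=1$. $\varphi_i=\psi_i(0)$. $F_U(h)=\max_{u\in U}h\cdot u$, $U^*=\{h:F_U(h)\le1\}$; $r(\theta)>0$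 with $F_U(r(\theta)\cos\theta,r(\theta)\sin\theta)=1$ is the polar equation of $\partial U^*$; $r'(\theta)$ denotes any number between the one-sided derivatives of $r$ at $\theta$. For $M=1$, $\theta(t)$ is a continuous function with $(h_1(t),h_2(t))=r(\theta(t))(\cos\theta(t),\sin\theta(t))$; it satisfies $\varphi_3+\varphi_4x(t)=r^2(\theta(t))\dot\theta(t)$ and $\dot\theta^2=\Phi(\theta)$. *)

theory Defs
  imports "HOL-Analysis.Analysis"
begin

text \<open>Vectors of R^2 are pairs (u1,u2); u = u1 X(e) + u2 Y(e).\<close>

definition is_norm2 :: "(real \<times> real \<Rightarrow> real) \<Rightarrow> bool" where
  "is_norm2 F \<longleftrightarrow> (\<forall>w. F w = 0 \<longleftrightarrow> w = 0) \<and>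
     (\<forall>c w. F (c *\<^sub>R w) = \<bar>c\<bar> * F w) \<and>
     (\<forall>v w. F (v + w) \<le> F v + F w)"

definition Uset :: "(real \<times> real \<Rightarrow> real) \<Rightarrow> (real \<times> real) set" where
  "Uset F = {u. F u \<le> 1}"

definition FU :: "(real \<times> real \<Rightarrow> real) \<Rightarrow> real \<times> real \<Rightarrow> real" where
  "FU F h = Sup ((\<lambda>u. fst h * fst u + snd h * snd u) ` Uset F)"

text \<open>Polar equation r(theta) of the boundary of U*.\<close>
definition rr :: "(real \<times> real \<Rightarrow> real) \<Rightarrow> real \<Rightarrow> real" where
  "rr F \<theta> = (THE r. r > 0 \<and> FU F (r * cos \<theta>, r * sin \<theta>) = 1)"

text \<open>d is an admissible value of r'(theta): a number between the one-sided derivatives.\<close>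
definition is_rprime :: "(real \<times> real \<Rightarrow> real) \<Rightarrow> real \<Rightarrow> real \<Rightarrow> bool" where
  "is_rprime F \<theta> d \<longleftrightarrow> (\<exists>dl dr. (rr F has_real_derivative dl) (at_left \<theta>) \<and>
      (rr F has_real_derivative dr) (at_right \<theta>) \<and> min dl dr \<le> d \<and> d \<le> max dl dr)"

definition u1fun :: "(real \<times> real \<Rightarrow> real) \<Rightarrow> real \<Rightarrow> real \<Rightarrow> real" where
  "u1fun F \<theta> d = (d * sin \<theta> + rr F \<theta> * cos \<theta>) / (rr F \<theta>)\<^sup>2"

definition Phi :: "(real \<times> real \<Rightarrow> real) \<Rightarrow> real \<Rightarrow> real \<Rightarrow> real \<Rightarrow> real \<Rightarrow> real" where
  "Phi F \<phi>2 \<phi>3 \<phi>4 \<theta> = (\<phi>3\<^sup>2 + 2 * \<phi>4 * (rr F \<theta> * sin \<theta> - \<phi>2)) / (rr F \<theta>) ^ 4"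

definition ham1 :: "real \<Rightarrow> real \<Rightarrow> real \<Rightarrow> real \<Rightarrow> real \<Rightarrow> real \<Rightarrow> real" where
  "ham1 p1 p3 p4 x y z = p1 - p3 * y / 2 - p4 * x * y / 12 - p4 * z / 2"

definition ham2 :: "real \<Rightarrow> real \<Rightarrow> real \<Rightarrow> real \<Rightarrow> real" where
  "ham2 p2 p3 p4 x = p2 + p3 * x / 2 + p4 * x\<^sup>2 / 12"

text \<open>Solution of an ODE in the absolutely continuous (Caratheodory) sense:
  f(b) - f(a) is the integral of the right-hand side over [a,b].\<close>
definition ac_sol :: "(real \<Rightarrow> real) \<Rightarrow> (real \<Rightarrow> real) \<Rightarrow> bool" where
  "ac_sol f g \<longleftrightarrow> (\<forall>a b. a \<le> b \<longrightarrow> (g has_integral (f b - f a)) {a..b})"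

text \<open>Normal extremal (M = 1) defined for all t in R, starting at the identity.\<close>
definition normal_extremal ::
  "(real \<times> real \<Rightarrow> real) \<Rightarrow> (real \<Rightarrow> real \<times> real) \<Rightarrow>
   (real \<Rightarrow> real) \<Rightarrow> (real \<Rightarrow> real) \<Rightarrow> (real \<Rightarrow> real) \<Rightarrow> (real \<Rightarrow> real) \<Rightarrow>
   (real \<Rightarrow> real) \<Rightarrow> (real \<Rightarrow> real) \<Rightarrow> (real \<Rightarrow> real) \<Rightarrow> (real \<Rightarrow> real) \<Rightarrow> bool" where
  "normal_extremal F u x y z v p1 p2 p3 p4 \<longleftrightarrow>
     u \<in> borel_measurable lborel \<and> (\<forall>t. u t \<in> Uset F) \<and>
     x 0 = 0 \<and> y 0 = 0 \<and> z 0 = 0 \<and> v 0 = 0 \<and>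
     ac_sol x (\<lambda>t. fst (u t)) \<and>
     ac_sol y (\<lambda>t. snd (u t)) \<and>
     ac_sol z (\<lambda>t. (x t * snd (u t) - y t * fst (u t)) / 2) \<and>
     ac_sol v (\<lambda>t. - (z t + x t * y t / 6) * fst (u t) / 2 + (x t)\<^sup>2 * snd (u t) / 12) \<and>
     (\<forall>t. (p1 t, p2 t, p3 t, p4 t) \<noteq> (0, 0, 0, 0)) \<and>
     ac_sol p1 (\<lambda>t. p4 t * y t * fst (u t) / 12 - (p3 t / 2 + p4 t * x t / 6) * snd (u t)) \<and>
     ac_sol p2 (\<lambda>t. (p3 t / 2 + p4 t * x t / 12) * fst (u t)) \<and>
     ac_sol p3 (\<lambda>t. p4 t * fst (u t) / 2) \<and>
     ac_sol p4 (\<lambda>t. 0) \<and>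
     (AE t in lborel.
        ham1 (p1 t) (p3 t) (p4 t) (x t) (y t) (z t) * fst (u t)
          + ham2 (p2 t) (p3 t) (p4 t) (x t) * snd (u t)
        = FU F (ham1 (p1 t) (p3 t) (p4 t) (x t) (y t) (z t), ham2 (p2 t) (p3 t) (p4 t) (x t))
      \<and> FU F (ham1 (p1 t) (p3 t) (p4 t) (x t) (y t) (z t), ham2 (p2 t) (p3 t) (p4 t) (x t)) = 1)"

definition angle_fun :: "(real \<times> real \<Rightarrow> real) \<Rightarrow> (real \<Rightarrow> real) \<Rightarrow> (real \<Rightarrow> real) \<Rightarrow> (real \<Rightarrow> real) \<Rightarrow> bool" where
  "angle_fun F h1 h2 \<theta> \<longleftrightarrow> continuous_on UNIV \<theta> \<and>
     (\<forall>t. h1 t = rr F (\<theta> t) * cos (\<theta> t) \<and> h2 t = rr F (\<theta> t) * sin (\<theta> t))"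

end

theory Submission
  imports Defs "HOL-Library.Landau_Symbols"
begin

text \<open>Write \<rho>(\<theta>) = F_U(cos \<theta>, sin \<theta>) = 1/r(\<theta>) and g(\<theta>) = r(\<theta>) sin \<theta>. As the numerator
  \<phi>3^2 + 2 \<phi>4 (g(\<theta>) - \<phi>2) of \<Phi> vanishes at \<Theta>1, \<Theta>2 and is positive in between,
  \<phi>4 g(\<theta>) exceeds its values at the endpoints on (\<Theta>1, \<Theta>2). Sublinearity of F_U makes \<rho> lie
  above its one-sided tangent lines along the circle, uniformly in s; comparing g at s with g at
  a nearby point of larger \<phi>4 g then shows that \<phi>4 u1(s) points towards the interior.

  Along the extremal, dh1 = -w dy, dh2 = w dx with w = \<phi>3 + \<phi>4 x, and h1 dx + h2 dy = dt. These
  identities hold only in integrated form, since x and y are merely Lipschitz; they are handled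
  as first-order expansions in the increments of x and y. They give r(\<theta>)^2 \<theta>' = w and
  w^2 = \<phi>3^2 + 2 \<phi>4 (h2 - \<phi>2), hence \<theta>'^2 = \<Phi>(\<theta>) with \<theta>' continuous. So \<theta>' does not vanish
  while \<theta> is strictly between \<Theta>1 and \<Theta>2, and by the mean value theorem its sign as \<theta> leaves
  an endpoint is the direction of motion.\<close>

section \<open>Norms on the plane and their dual norm\<close>

lemma norm2_scaleR: "is_norm2 F \<Longrightarrow> F (c *\<^sub>R w) = \<bar>c\<bar> * F w"
  unfolding is_norm2_def by blast

lemma norm2_zero: "is_norm2 F \<Longrightarrow> F 0 = 0"
  using norm2_scaleR[of F 0 0] by simp

lemma norm2_triangle: "is_norm2 F \<Longrightarrow> F (v + w) \<le> F v + F w"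
  unfolding is_norm2_def by blast

lemma norm2_minus: "is_norm2 F \<Longrightarrow> F (- w) = F w"
  using norm2_scaleR[of F "-1" w] by simp

lemma norm2_nonneg:
  assumes "is_norm2 F" shows "0 \<le> F w"
  using norm2_triangle[OF assms, of w "-w"] norm2_zero[OF assms] norm2_minus[OF assms] by simp

lemma norm2_le_coordinate_sum:
  assumes "is_norm2 F" shows "F w \<le> (F (1,0) + F (0,1)) * norm w"
proof -
  obtain a b where "w = (a, b)" by fastforce
  then have w: "w = a *\<^sub>R (1,0) + b *\<^sub>R (0,1)" by simp
  then have "F w \<le> \<bar>a\<bar> * F (1,0) + \<bar>b\<bar> * F (0,1)"
    using norm2_triangle[OF assms] norm2_scaleR[OF assms] by metis
  also have "\<dots> \<le> norm w * F (1,0) + norm w * F (0,1)"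
    using norm2_nonneg[OF assms] w
    by (intro add_mono mult_right_mono) (auto simp: norm_Pair)
  finally show ?thesis by (simp add: algebra_simps)
qed

lemma norm2_continuous:
  assumes "is_norm2 F" shows "continuous_on UNIV F"
proof (rule lipschitz_on_continuous_on)
  let ?C = "F (1,0) + F (0,1)"
  have one_side: "F v \<le> F w + ?C * dist v w" for v w
    using norm2_triangle[OF assms, of w "v - w"] norm2_le_coordinate_sum[OF assms, of "v - w"]
    by (simp add: dist_norm)
  have "dist (F v) (F w) \<le> ?C * dist v w" for v w
    using one_side[of v w] one_side[of w v] by (simp add: dist_real_def dist_commute abs_le_iff)
  then show "?C-lipschitz_on UNIV F"
    using norm2_nonneg[OF assms] by (intro lipschitz_onI) auto
qed

lemma norm2_bounded_below:
  assumes "is_norm2 F" shows "\<exists>m>0. \<forall>w. m * norm w \<le> F w"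
proof -
  have "(1::real, 0::real) \<in> sphere 0 1" by simp
  moreover have "continuous_on (sphere 0 1) F"
    using norm2_continuous[OF assms] continuous_on_subset by blast
  ultimately obtain w0 where w0: "w0 \<in> sphere (0::real \<times> real) 1" "\<And>w. w \<in> sphere 0 1 \<Longrightarrow> F w0 \<le> F w"
    using continuous_attains_inf[of "sphere 0 1" F] by auto
  have "w0 \<noteq> 0" using w0(1) by auto
  then have "F w0 \<noteq> 0" using assms unfolding is_norm2_def by blast
  then have "0 < F w0" using norm2_nonneg[OF assms, of w0] by simp
  moreover have "F w0 * norm w \<le> F w" for w
  proof (cases "w = 0")
    case False
    then have "F w0 \<le> F ((1 / norm w) *\<^sub>R w)" by (intro w0(2)) simp
    also have "\<dots> = F w / norm w" using norm2_scaleR[OF assms] by simp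
    finally show ?thesis using False by (simp add: field_simps)
  qed (simp add: norm2_zero[OF assms])
  ultimately show ?thesis by blast
qed

locale planar_norm =
  fixes F :: "real \<times> real \<Rightarrow> real" and m M :: real
  assumes is_norm: "is_norm2 F" and m_pos: "0 < m"
    and lower_bound: "\<And>w. m * norm w \<le> F w" and upper_bound: "\<And>w. F w \<le> M * norm w"
begin

lemma M_pos: "0 < M"
  using lower_bound[of "(1,0)"] upper_bound[of "(1,0)"] m_pos by simp

lemma FU_eq_SUP_inner: "FU F h = (SUP u\<in>Uset F. h \<bullet> u)"
  unfolding FU_def by (simp add: inner_prod_def)

lemma zero_in_Uset: "0 \<in> Uset F"
  by (simp add: Uset_def norm2_zero[OF is_norm])

lemma Uset_norm_le: "u \<in> Uset F \<Longrightarrow> norm u \<le> 1 / m"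
  using lower_bound[of u] m_pos unfolding Uset_def by (simp add: field_simps)

lemma inner_Uset_le: "u \<in> Uset F \<Longrightarrow> h \<bullet> u \<le> norm h / m"
proof -
  assume "u \<in> Uset F"
  have "h \<bullet> u \<le> norm h * norm u" by (rule norm_cauchy_schwarz)
  also have "\<dots> \<le> norm h * (1 / m)"
    using Uset_norm_le[OF \<open>u \<in> Uset F\<close>] by (intro mult_left_mono) simp_all
  finally show ?thesis by simp
qed

lemma inner_le_FU: "u \<in> Uset F \<Longrightarrow> h \<bullet> u \<le> FU F h"
  unfolding FU_eq_SUP_inner
  by (rule cSUP_upper) (auto intro!: bdd_aboveI2 inner_Uset_le)

lemma FU_le: "(\<And>u. u \<in> Uset F \<Longrightarrow> h \<bullet> u \<le> c) \<Longrightarrow> FU F h \<le> c"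
  unfolding FU_eq_SUP_inner using zero_in_Uset by (intro cSUP_least) auto

lemma FU_le_norm: "FU F h \<le> norm h / m"
  by (intro FU_le inner_Uset_le)

lemma norm_le_FU: "norm h \<le> M * FU F h"
proof (cases "h = 0")
  case False
  let ?u = "(1 / (M * norm h)) *\<^sub>R h"
  have "F ?u = F h / (M * norm h)"
    using norm2_scaleR[OF is_norm] M_pos by (simp add: abs_mult)
  also have "\<dots> \<le> 1" using upper_bound[of h] M_pos False by (simp add: field_simps)
  finally have "h \<bullet> ?u \<le> FU F h" by (intro inner_le_FU) (simp add: Uset_def)
  moreover have "h \<bullet> ?u = (norm h)\<^sup>2 / (M * norm h)" by (simp add: dot_square_norm)
  ultimately have "norm h / M \<le> FU F h" using False by (simp add: power2_eq_square)
  then show ?thesis using M_pos by (simp add: pos_divide_le_eq mult.commute)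
qed (use inner_le_FU[OF zero_in_Uset, of 0] M_pos in simp)

lemma FU_add_le: "FU F (h + k) \<le> FU F h + FU F k"
  by (rule FU_le) (simp add: inner_add_left add_mono inner_le_FU)

lemma FU_scaleR_le: "0 \<le> c \<Longrightarrow> FU F (c *\<^sub>R h) \<le> c * FU F h"
  by (rule FU_le) (simp add: mult_left_mono inner_le_FU)

lemma FU_scaleR: "0 \<le> c \<Longrightarrow> FU F (c *\<^sub>R h) = c * FU F h"
proof (cases "c = 0")
  case True
  then show ?thesis using FU_scaleR_le[of 0 h] inner_le_FU[OF zero_in_Uset, of 0] by simp
next
  case False
  assume "0 \<le> c"
  then have "c * FU F h \<le> c * ((1 / c) * FU F (c *\<^sub>R h))"
    using FU_scaleR_le[of "1 / c" "c *\<^sub>R h"] False by (intro mult_left_mono) auto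
  then show ?thesis using FU_scaleR_le[OF \<open>0 \<le> c\<close>, of h] False by simp
qed

lemma scaleR_FU_le: "c * FU F h \<le> FU F (c *\<^sub>R h)"
proof (cases "0 \<le> c")
  case False
  have "0 \<le> FU F h + FU F (-h)"
    using FU_add_le[of h "-h"] FU_scaleR[of 0 h] by simp
  then have "c * FU F h \<le> (- c) * FU F (-h)"
    using mult_nonneg_nonneg[of "-c" "FU F h + FU F (-h)"] False by (simp add: algebra_simps)
  then show ?thesis using FU_scaleR[of "-c" "-h"] False by simp
qed (simp add: FU_scaleR)

lemma FU_continuous: "continuous_on UNIV (FU F)"
proof (rule lipschitz_on_continuous_on)
  have one_side: "FU F h \<le> FU F k + dist h k / m" for h k
    using FU_add_le[of k "h - k"] FU_le_norm[of "h - k"] by (simp add: dist_norm)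
  have "dist (FU F h) (FU F k) \<le> 1 / m * dist h k" for h k
    using one_side[of h k] one_side[of k h] by (simp add: dist_real_def dist_commute abs_le_iff)
  then show "(1 / m)-lipschitz_on UNIV (FU F)"
    using m_pos by (intro lipschitz_onI) auto
qed

end

section \<open>The dual norm on the unit circle\<close>

lemma sin_diff_commute: "sin (a - b) = - sin (b - a)"
  by (metis minus_diff_eq sin_minus)

lemma has_real_derivative_nonpos_of_sign:
  fixes k :: "real \<Rightarrow> real"
  assumes der: "(k has_real_derivative D) (at s within S)" and nontriv: "at s within S \<noteq> bot"
    and "0 < e" and sign: "\<And>y. \<bar>y - s\<bar> < e \<Longrightarrow> (k y - k s) * (y - s) \<le> 0"
  shows "D \<le> 0"
proof (rule tendsto_upperbound)
  show "((\<lambda>y. (k y - k s) / (y - s)) \<longlongrightarrow> D) (at s within S)"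
    using der by (simp add: has_field_derivative_iff)
  show "\<forall>\<^sub>F y in at s within S. (k y - k s) / (y - s) \<le> 0"
    unfolding eventually_at using \<open>0 < e\<close> sign
    by (intro exI[of _ e]) (auto simp: dist_real_def divide_le_0_iff mult_le_0_iff)
qed (fact nontriv)

lemma isCont_pos_nbhd:
  fixes f :: "real \<Rightarrow> real"
  assumes "isCont f x" "0 < f x"
  obtains \<delta> where "0 < \<delta>" "\<And>y. \<bar>y - x\<bar> < \<delta> \<Longrightarrow> 0 < f y"
proof -
  obtain \<delta> where "0 < \<delta>" "\<And>y. norm (y - x) < \<delta> \<Longrightarrow> \<bar>f y - f x\<bar> < f x"
    using assms continuous_at_real_range by metis
  then show ?thesis using that by (fastforce simp: abs_less_iff)
qed

context planar_norm
begin

definition rho :: "real \<Rightarrow> real" where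
  "rho \<theta> = FU F (cos \<theta>, sin \<theta>)"

lemma rho_bounds: "1 / M \<le> rho \<theta>" "rho \<theta> \<le> 1 / m"
  using norm_le_FU[of "(cos \<theta>, sin \<theta>)"] FU_le_norm[of "(cos \<theta>, sin \<theta>)"] M_pos
  by (simp_all add: rho_def norm_Pair field_simps)

lemma rho_pos: "0 < rho \<theta>"
proof -
  have "0 < 1 / M" using M_pos by simp
  then show ?thesis using rho_bounds(1)[of \<theta>] by linarith
qed

lemma rr_eq: "rr F \<theta> = 1 / rho \<theta>"
  unfolding rr_def
proof (rule the_equality)
  have scale: "FU F (r * cos \<theta>, r * sin \<theta>) = r * rho \<theta>" if "0 \<le> r" for r
    using FU_scaleR[OF that, of "(cos \<theta>, sin \<theta>)"] by (simp add: rho_def)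
  show "0 < 1 / rho \<theta> \<and> FU F (1 / rho \<theta> * cos \<theta>, 1 / rho \<theta> * sin \<theta>) = 1"
    using scale[of "1 / rho \<theta>"] rho_pos[of \<theta>] by simp
  show "r = 1 / rho \<theta>" if "0 < r \<and> FU F (r * cos \<theta>, r * sin \<theta>) = 1" for r
    using scale[of r] that rho_pos[of \<theta>] by (auto simp: field_simps)
qed

lemma rr_pos: "0 < rr F \<theta>"
  using rho_pos by (simp add: rr_eq)

lemma rho_eq_inverse_rr: "rho = (\<lambda>\<theta>. inverse (rr F \<theta>))"
  by (simp add: rr_eq fun_eq_iff)

lemma isCont_rho: "isCont rho \<theta>"
proof -
  have "continuous_on UNIV (\<lambda>\<theta>. FU F (cos \<theta>, sin \<theta>))"
    by (rule continuous_on_compose2[OF FU_continuous]) (intro continuous_intros, simp)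
  then show ?thesis by (simp add: rho_def[abs_def] continuous_on_eq_continuous_at)
qed

lemma isCont_rr: "isCont (rr F) \<theta>"
proof -
  have "isCont (\<lambda>\<theta>. 1 / rho \<theta>) \<theta>"
    using isCont_rho[of \<theta>] rho_pos[of \<theta>] by (intro continuous_intros) auto
  then show ?thesis by (simp add: rr_eq[abs_def])
qed

text \<open>Sublinearity of FU applied to the identity
  sin (\<gamma> - \<alpha>) e(\<beta>) = sin (\<gamma> - \<beta>) e(\<alpha>) + sin (\<beta> - \<alpha>) e(\<gamma>), with e(\<theta>) = (cos \<theta>, sin \<theta>).\<close>
lemma rho_sin_combination:
  assumes "0 \<le> sin (\<gamma> - \<beta>)" "0 \<le> sin (\<beta> - \<alpha>)"
  shows "rho \<beta> * sin (\<gamma> - \<alpha>) \<le> rho \<alpha> * sin (\<gamma> - \<beta>) + rho \<gamma> * sin (\<beta> - \<alpha>)"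
proof -
  have combination: "sin (\<gamma> - \<alpha>) *\<^sub>R (cos \<beta>, sin \<beta>) =
      sin (\<gamma> - \<beta>) *\<^sub>R (cos \<alpha>, sin \<alpha>) + sin (\<beta> - \<alpha>) *\<^sub>R (cos \<gamma>, sin \<gamma>)"
    by (simp add: sin_diff algebra_simps)
  have "sin (\<gamma> - \<alpha>) * rho \<beta> \<le> FU F (sin (\<gamma> - \<alpha>) *\<^sub>R (cos \<beta>, sin \<beta>))"
    unfolding rho_def by (rule scaleR_FU_le)
  also have "\<dots> \<le> FU F (sin (\<gamma> - \<beta>) *\<^sub>R (cos \<alpha>, sin \<alpha>)) + FU F (sin (\<beta> - \<alpha>) *\<^sub>R (cos \<gamma>, sin \<gamma>))"
    unfolding combination by (rule FU_add_le)
  also have "\<dots> = sin (\<gamma> - \<beta>) * rho \<alpha> + sin (\<beta> - \<alpha>) * rho \<gamma>"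
    using assms by (simp only: FU_scaleR rho_def)
  finally show ?thesis by (simp add: mult.commute)
qed

lemma rho_chord_sign:
  assumes "\<bar>\<gamma> - s\<bar> < pi" "\<bar>y - s\<bar> \<le> min \<bar>\<gamma> - s\<bar> (pi - \<bar>\<gamma> - s\<bar>)"
  shows "(rho y * sin (\<gamma> - s) - rho s * sin (\<gamma> - y) - rho \<gamma> * sin (y - s)) * (y - s) \<le> 0"
proof -
  let ?k = "rho y * sin (\<gamma> - s) - rho s * sin (\<gamma> - y) - rho \<gamma> * sin (y - s)"
  have sin_nonneg: "0 \<le> a \<Longrightarrow> a \<le> pi \<Longrightarrow> 0 \<le> sin a" for a by (rule sin_ge_zero)
  have "(s \<le> y \<and> ?k \<le> 0) \<or> (y \<le> s \<and> 0 \<le> ?k)"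
  proof (cases "s \<le> \<gamma>"; cases "s \<le> y")
    assume "s \<le> \<gamma>" "s \<le> y"
    then show ?thesis using assms rho_sin_combination[of \<gamma> y s] sin_nonneg by auto
  next
    assume "s \<le> \<gamma>" "\<not> s \<le> y"
    then show ?thesis using assms rho_sin_combination[of \<gamma> s y] sin_nonneg
      by (auto simp: sin_diff_commute[of y s])
  next
    assume "\<not> s \<le> \<gamma>" "s \<le> y"
    then show ?thesis using assms rho_sin_combination[of y s \<gamma>] sin_nonneg
      by (auto simp: sin_diff_commute[of \<gamma> s] sin_diff_commute[of \<gamma> y])
  next
    assume "\<not> s \<le> \<gamma>" "\<not> s \<le> y"
    then show ?thesis using assms rho_sin_combination[of s y \<gamma>] sin_nonneg
      by (auto simp: sin_diff_commute[of \<gamma> s] sin_diff_commute[of \<gamma> y] sin_diff_commute[of y s])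
  qed
  then show ?thesis by (auto simp: mult_le_0_iff)
qed

lemma rho_tangent_le_of_one_sided_deriv:
  assumes der: "(rho has_real_derivative R) (at_left s) \<or> (rho has_real_derivative R) (at_right s)"
    and close: "\<bar>\<gamma> - s\<bar> < pi"
  shows "rho s * cos (\<gamma> - s) + R * sin (\<gamma> - s) \<le> rho \<gamma>"
proof (cases "\<gamma> = s")
  case False
  define k where "k y = rho y * sin (\<gamma> - s) - rho s * sin (\<gamma> - y) - rho \<gamma> * sin (y - s)" for y
  have "(k has_real_derivative R * sin (\<gamma> - s) + rho s * cos (\<gamma> - s) - rho \<gamma>) (at s within S)"
    if "(rho has_real_derivative R) (at s within S)" for S
    unfolding k_def by (auto intro!: derivative_eq_intros that)
  moreover have "(k y - k s) * (y - s) \<le> 0" if "\<bar>y - s\<bar> < min \<bar>\<gamma> - s\<bar> (pi - \<bar>\<gamma> - s\<bar>)" for y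
    using rho_chord_sign[OF close, of y] that by (simp add: k_def)
  moreover have "0 < min \<bar>\<gamma> - s\<bar> (pi - \<bar>\<gamma> - s\<bar>)" using False close by simp
  ultimately have "R * sin (\<gamma> - s) + rho s * cos (\<gamma> - s) - rho \<gamma> \<le> 0"
    using der has_real_derivative_nonpos_of_sign[of k _ s] trivial_limit_at_left_real trivial_limit_at_right_real
    by metis
  then show ?thesis by simp
qed simp

text \<open>For an admissible value d of r'(s), the slope -d/r(s)^2 lies between the one-sided
  derivatives of \<rho> = 1/r at s; rho_tangent is the corresponding tangent of \<rho> along the circle.\<close>
definition rho_tangent :: "real \<Rightarrow> real \<Rightarrow> real \<Rightarrow> real" where
  "rho_tangent s d \<gamma> = rho s * cos (\<gamma> - s) - d * (rho s)\<^sup>2 * sin (\<gamma> - s)"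

lemma rho_tangent_le:
  assumes "is_rprime F s d" "\<bar>\<gamma> - s\<bar> < pi"
  shows "rho_tangent s d \<gamma> \<le> rho \<gamma>"
proof -
  obtain dl dr where dl: "(rr F has_real_derivative dl) (at_left s)"
    and dr: "(rr F has_real_derivative dr) (at_right s)" and d: "min dl dr \<le> d" "d \<le> max dl dr"
    using assms(1) unfolding is_rprime_def by blast
  have "rho_tangent s d' \<gamma> \<le> rho \<gamma>"
    if "(rr F has_real_derivative d') (at_left s) \<or> (rr F has_real_derivative d') (at_right s)" for d'
  proof -
    have "(rho has_real_derivative - d' * (rho s)\<^sup>2) (at s within S)"
      if "(rr F has_real_derivative d') (at s within S)" for S
      unfolding rho_eq_inverse_rr using rr_pos[of s]
      by (auto intro!: derivative_eq_intros that simp: power2_eq_square power_inverse)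
    then have "rho s * cos (\<gamma> - s) + (- d' * (rho s)\<^sup>2) * sin (\<gamma> - s) \<le> rho \<gamma>"
      using rho_tangent_le_of_one_sided_deriv[OF _ assms(2)] that by blast
    then show ?thesis by (simp add: rho_tangent_def)
  qed
  then have ends: "rho_tangent s d' \<gamma> \<le> rho \<gamma>" if "d' \<in> {dl, dr}" for d'
    using dl dr that by blast
  have "\<exists>d' \<in> {dl, dr}. (d' - d) * ((rho s)\<^sup>2 * sin (\<gamma> - s)) \<le> 0"
  proof (cases "0 \<le> sin (\<gamma> - s)")
    case True
    then show ?thesis using d(1)
      by (intro bexI[of _ "min dl dr"]) (auto intro: mult_nonpos_nonneg simp: min_def)
  next
    case False
    then show ?thesis using d(2)
      by (intro bexI[of _ "max dl dr"]) (auto intro!: mult_nonneg_nonpos simp: max_def)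
  qed
  moreover have "rho_tangent s d \<gamma> \<le> rho_tangent s d' \<gamma>"
    if "(d' - d) * ((rho s)\<^sup>2 * sin (\<gamma> - s)) \<le> 0" for d'
    using that unfolding rho_tangent_def by (simp add: left_diff_distrib mult.assoc)
  ultimately obtain d' where "d' \<in> {dl, dr}" "rho_tangent s d \<gamma> \<le> rho_tangent s d' \<gamma>"
    by blast
  then show ?thesis using ends by fastforce
qed

lemma rho_tangent_pos_near:
  obtains \<eta> where "0 < \<eta>" "\<eta> < pi"
    "\<And>s d \<gamma>. is_rprime F s d \<Longrightarrow> \<bar>\<gamma> - s\<bar> \<le> \<eta> \<Longrightarrow> 0 < rho_tangent s d \<gamma>"
proof
  define \<eta> where "\<eta> = min (pi / 3) (m / (4 * M))"
  show "0 < \<eta>" "\<eta> < pi" using m_pos M_pos pi_gt_zero by (auto simp: \<eta>_def min_less_iff_disj)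
  fix s d \<gamma> assume rp: "is_rprime F s d" and close: "\<bar>\<gamma> - s\<bar> \<le> \<eta>"
  have "- (d * (rho s)\<^sup>2) \<le> rho (s + pi / 2)" "d * (rho s)\<^sup>2 \<le> rho (s - pi / 2)"
    using rho_tangent_le[OF rp, of "s + pi / 2"] rho_tangent_le[OF rp, of "s - pi / 2"]
    by (simp_all add: rho_tangent_def)
  then have slope: "\<bar>d * (rho s)\<^sup>2\<bar> \<le> 1 / m"
    using rho_bounds(2)[of "s + pi / 2"] rho_bounds(2)[of "s - pi / 2"] by linarith
  have "cos (pi / 3) \<le> cos \<bar>\<gamma> - s\<bar>"
    using close by (intro cos_monotone_0_pi_le) (auto simp: \<eta>_def)
  then have "rho s / 2 \<le> rho s * cos (\<gamma> - s)"
    using rho_pos[of s] by (simp add: cos_60)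
  moreover have "\<bar>d * (rho s)\<^sup>2 * sin (\<gamma> - s)\<bar> \<le> 1 / m * \<bar>\<gamma> - s\<bar>"
    unfolding abs_mult[of "d * (rho s)\<^sup>2"]
    by (rule mult_mono[OF slope abs_sin_x_le_abs_x]) (use m_pos in auto)
  moreover have "1 / m * \<bar>\<gamma> - s\<bar> \<le> 1 / (4 * M)"
    using close m_pos by (simp add: \<eta>_def field_simps)
  moreover have "1 / (4 * M) < rho s / 2"
    using rho_bounds(1)[of s] M_pos by (simp add: field_simps)
  ultimately show "0 < rho_tangent s d \<gamma>" unfolding rho_tangent_def by linarith
qed

lemma u1fun_eq: "u1fun F s d = rho s * cos s + d * (rho s)\<^sup>2 * sin s"
  using rho_pos[of s] by (simp add: u1fun_def rr_eq field_simps power2_eq_square)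

lemma sign_of_mult_sin:
  assumes "\<sigma> = 1 \<or> \<sigma> = -1" "0 < a * sin x" "0 < \<sigma> * x" "\<sigma> * x < pi"
  shows "0 < \<sigma> * a"
proof -
  have "a * sin x = (\<sigma> * a) * sin (\<sigma> * x)" using assms(1) by auto
  with assms(2) have "0 < (\<sigma> * a) * sin (\<sigma> * x)" by simp
  then show ?thesis using sin_gt_zero[OF assms(3,4)] by (rule zero_less_mult_pos2)
qed

text \<open>Let u = (u1, u2) be the vector with u \<bullet> e(\<gamma>) = rho_tangent s d \<gamma>, where e(\<gamma>) = (cos \<gamma>, sin \<gamma>).
  The identity sin \<gamma> (u \<bullet> e(s)) - sin s (u \<bullet> e(\<gamma>)) = u1 sin (\<gamma> - s) turns the bound
  rho_tangent s d \<gamma> \<le> \<rho>(\<gamma>) into a comparison of the heights r(\<theta>) sin \<theta>.\<close>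
lemma u1_sign_of_higher_point:
  assumes rp: "is_rprime F s d" and dir: "\<kappa> = 1 \<or> \<kappa> = -1" "0 < \<kappa> * (\<gamma> - s)" "\<kappa> * (\<gamma> - s) < pi"
    and pos: "0 < rho_tangent s d \<gamma>" and sign: "0 \<le> c * sin \<gamma>"
    and higher: "c * (rr F s * sin s) < c * (rr F \<gamma> * sin \<gamma>)"
  shows "0 < \<kappa> * (c * u1fun F s d)"
proof -
  let ?T = "rho_tangent s d \<gamma>"
  have "sin \<gamma> = sin s * cos (\<gamma> - s) + cos s * sin (\<gamma> - s)"
    using sin_add[of s "\<gamma> - s"] by simp
  then have identity: "sin \<gamma> * rho s - sin s * ?T = u1fun F s d * sin (\<gamma> - s)"
    unfolding rho_tangent_def u1fun_eq by (simp add: algebra_simps)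
  have "\<bar>\<gamma> - s\<bar> < pi" using dir by auto
  have "c * (rr F \<gamma> * sin \<gamma>) = c * sin \<gamma> / rho \<gamma>" by (simp add: rr_eq)
  also have "\<dots> \<le> c * sin \<gamma> / ?T"
    using rho_tangent_le[OF rp \<open>\<bar>\<gamma> - s\<bar> < pi\<close>] pos sign by (intro divide_left_mono) auto
  also have "\<dots> = c * (rr F s * sin s) + c * u1fun F s d * sin (\<gamma> - s) / (?T * rho s)"
    using identity pos rho_pos[of s] by (simp add: rr_eq field_simps)
  finally have "0 < c * u1fun F s d * sin (\<gamma> - s) / (?T * rho s)" using higher by linarith
  then have "0 < c * u1fun F s d * sin (\<gamma> - s)"
    using pos_less_divide_eq[of "?T * rho s" 0 "c * u1fun F s d * sin (\<gamma> - s)"] pos rho_pos[of s] by simp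
  then show ?thesis by (rule sign_of_mult_sin[OF dir(1) _ dir(2,3)])
qed

text \<open>\<sigma> = 1 at a left endpoint \<Theta> of the interval on which c r(\<theta>) sin \<theta> exceeds its value
  at \<Theta>, and \<sigma> = -1 at a right one. If c sin \<Theta> \<le> 0 the comparison point is \<Theta> itself,
  otherwise a point inside the interval close to \<Theta>.\<close>
lemma u1_sign_near_endpoint:
  assumes side: "\<sigma> = 1 \<or> \<sigma> = -1" and "0 < L"
    and higher: "\<And>s. 0 < \<sigma> * (s - \<Theta>) \<Longrightarrow> \<sigma> * (s - \<Theta>) < L \<Longrightarrow>
      c * (rr F \<Theta> * sin \<Theta>) < c * (rr F s * sin s)"
  shows "\<exists>\<epsilon>>0. \<forall>s d. 0 < \<sigma> * (s - \<Theta>) \<and> \<sigma> * (s - \<Theta>) < \<epsilon> \<and> is_rprime F s d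
      \<longrightarrow> 0 < \<sigma> * (c * u1fun F s d)"
proof -
  obtain \<eta> where \<eta>: "0 < \<eta>" "\<eta> < pi"
    and tangent_pos: "\<And>s d \<gamma>. is_rprime F s d \<Longrightarrow> \<bar>\<gamma> - s\<bar> \<le> \<eta> \<Longrightarrow> 0 < rho_tangent s d \<gamma>"
    using rho_tangent_pos_near by blast
  have dist: "\<bar>x\<bar> = \<sigma> * x" if "0 \<le> \<sigma> * x" for x
    using side that by auto
  show ?thesis
  proof (cases "c * sin \<Theta> \<le> 0")
    case True
    have "0 < - \<sigma> * (- c * u1fun F s d)"
      if "0 < \<sigma> * (s - \<Theta>)" "\<sigma> * (s - \<Theta>) < min \<eta> L" and rp: "is_rprime F s d" for s d
    proof (rule u1_sign_of_higher_point[OF rp])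
      have "\<bar>\<Theta> - s\<bar> \<le> \<eta>" using that dist[of "s - \<Theta>"] by (simp add: abs_minus_commute)
      then show "0 < rho_tangent s d \<Theta>" by (rule tangent_pos[OF rp])
    qed (use side that True higher[of s] \<eta> in auto)
    then show ?thesis using \<eta>(1) \<open>0 < L\<close> by (intro exI[of _ "min \<eta> L"]) auto
  next
    case False
    have "isCont (\<lambda>y. c * sin y) \<Theta>" by (intro continuous_intros)
    moreover have "0 < c * sin \<Theta>" using False by simp
    ultimately obtain \<delta> where \<delta>: "0 < \<delta>" "\<And>y. \<bar>y - \<Theta>\<bar> < \<delta> \<Longrightarrow> 0 < c * sin y"
      by (rule isCont_pos_nbhd) blast
    define \<phi> where "\<phi> = \<Theta> + \<sigma> * (min \<delta> (min \<eta> L) / 2)"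
    have "\<bar>\<phi> - \<Theta>\<bar> < \<delta>" "0 < \<sigma> * (\<phi> - \<Theta>)" "\<sigma> * (\<phi> - \<Theta>) < \<eta>" "\<sigma> * (\<phi> - \<Theta>) < L"
      using side \<delta>(1) \<eta>(1) \<open>0 < L\<close> by (auto simp: \<phi>_def)
    moreover from \<delta>(2)[OF this(1)] have "0 \<le> c * sin \<phi>" by simp
    ultimately have \<phi>: "0 < \<sigma> * (\<phi> - \<Theta>)" "\<sigma> * (\<phi> - \<Theta>) < \<eta>" "\<sigma> * (\<phi> - \<Theta>) < L" "0 \<le> c * sin \<phi>"
      by simp_all
    have "isCont (\<lambda>y. c * (rr F \<phi> * sin \<phi>) - c * (rr F y * sin y)) \<Theta>"
      by (intro continuous_intros isCont_rr)
    moreover have "0 < c * (rr F \<phi> * sin \<phi>) - c * (rr F \<Theta> * sin \<Theta>)" using higher \<phi> by simp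
    ultimately obtain \<epsilon> where "0 < \<epsilon>"
      and \<epsilon>: "\<And>s. \<bar>s - \<Theta>\<bar> < \<epsilon> \<Longrightarrow> c * (rr F s * sin s) < c * (rr F \<phi> * sin \<phi>)"
      by (rule isCont_pos_nbhd) auto
    have "0 < \<sigma> * (c * u1fun F s d)"
      if s: "0 < \<sigma> * (s - \<Theta>)" "\<sigma> * (s - \<Theta>) < min \<epsilon> (\<sigma> * (\<phi> - \<Theta>))" and rp: "is_rprime F s d"
      for s d
    proof (rule u1_sign_of_higher_point[OF rp side])
      have "0 \<le> \<sigma> * (\<phi> - s)" using s by (simp add: algebra_simps)
      then show "0 < rho_tangent s d \<phi>"
        using tangent_pos[OF rp] s \<phi> dist[of "\<phi> - s"] by (simp add: algebra_simps)
      show "c * (rr F s * sin s) < c * (rr F \<phi> * sin \<phi>)"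
        using \<epsilon> s dist[of "s - \<Theta>"] by simp
    qed (use s \<phi> \<eta> in \<open>simp_all add: algebra_simps\<close>)
    then show ?thesis using \<open>0 < \<epsilon>\<close> \<phi>(1) by (intro exI[of _ "min \<epsilon> (\<sigma> * (\<phi> - \<Theta>))"]) auto
  qed
qed

lemma rsin_above_endpoint:
  assumes "Phi F \<phi>2 \<phi>3 \<phi>4 \<Theta> = 0" "0 < Phi F \<phi>2 \<phi>3 \<phi>4 s"
  shows "\<phi>4 * (rr F \<Theta> * sin \<Theta>) < \<phi>4 * (rr F s * sin s)"
proof -
  have "0 < (rr F s) ^ 4" "0 < (rr F \<Theta>) ^ 4" using rr_pos[of s] rr_pos[of \<Theta>] by simp_all
  then have "\<phi>3\<^sup>2 + 2 * \<phi>4 * (rr F \<Theta> * sin \<Theta> - \<phi>2) = 0" "0 < \<phi>3\<^sup>2 + 2 * \<phi>4 * (rr F s * sin s - \<phi>2)"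
    using assms by (simp_all add: Phi_def zero_less_divide_iff)
  then show ?thesis by (simp add: algebra_simps)
qed

end

section \<open>First-order expansions along a Lipschitz path\<close>

lemma ac_sol_diff:
  assumes "ac_sol X f" "ac_sol Y g" shows "ac_sol (\<lambda>t. X t - Y t) (\<lambda>t. f t - g t)"
  unfolding ac_sol_def
proof (intro allI impI)
  fix a b :: real assume "a \<le> b"
  then have "((\<lambda>t. f t - g t) has_integral (X b - X a - (Y b - Y a))) {a..b}"
    using assms unfolding ac_sol_def by (intro has_integral_diff) auto
  then show "((\<lambda>t. f t - g t) has_integral (X b - Y b - (X a - Y a))) {a..b}"
    by (simp add: algebra_simps)
qed

lemma ac_sol_cmult:
  assumes "ac_sol X f" shows "ac_sol (\<lambda>t. c * X t) (\<lambda>t. c * f t)"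
  unfolding ac_sol_def
proof (intro allI impI)
  fix a b :: real assume "a \<le> b"
  then have "((\<lambda>t. c * f t) has_integral (c * (X b - X a))) {a..b}"
    using assms unfolding ac_sol_def by (intro has_integral_mult_right) auto
  then show "((\<lambda>t. c * f t) has_integral (c * X b - c * X a)) {a..b}"
    by (simp add: algebra_simps)
qed

lemma ac_sol_id: "ac_sol (\<lambda>t. t) (\<lambda>t. 1)"
  unfolding ac_sol_def
proof (intro allI impI)
  fix a b :: real assume "a \<le> b"
  then show "((\<lambda>t. 1) has_integral (b - a)) {a..b}" using has_integral_const_real[of "1::real" a b] by simp
qed

lemma ac_sol_increment_bound:
  assumes "ac_sol P q" "negligible N" "0 \<le> B"
    and bound: "\<And>\<sigma>. \<sigma> \<notin> N \<Longrightarrow> \<sigma> \<in> closed_segment a b \<Longrightarrow> \<bar>q \<sigma>\<bar> \<le> B"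
  shows "\<bar>P b - P a\<bar> \<le> B * \<bar>b - a\<bar>"
proof -
  let ?c = "min a b" and ?d = "max a b"
  have "(q has_integral (P ?d - P ?c)) {?c..?d}" using assms(1) unfolding ac_sol_def by simp
  then have "((\<lambda>\<sigma>. if \<sigma> \<in> N then 0 else q \<sigma>) has_integral (P ?d - P ?c)) {?c..?d}"
    by (rule has_integral_spike[OF assms(2), rotated]) auto
  moreover have "norm (if \<sigma> \<in> N then 0 else q \<sigma>) \<le> B" if "\<sigma> \<in> {?c..?d} - {}" for \<sigma>
    using bound[of \<sigma>] that assms(3) by (cases "a \<le> b") (auto simp: closed_segment_eq_real_ivl)
  ultimately have "norm (P ?d - P ?c) \<le> B * Henstock_Kurzweil_Integration.content {?c..?d}"
    by (rule has_integral_bound_real[OF assms(3) finite.emptyI])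
  then show ?thesis by (cases "a \<le> b") (simp_all add: abs_minus_commute content_real)
qed

lemma square_smallo_at: "(\<lambda>s. (s - t)\<^sup>2) \<in> o[at t](\<lambda>s. s - t)"
proof (rule smalloI_tendsto)
  have "((\<lambda>s. s - t) \<longlongrightarrow> 0) (at t)"
    using tendsto_diff[OF tendsto_ident_at tendsto_const, of t t] by simp
  moreover have "\<forall>\<^sub>F s in at t. s - t = (s - t)\<^sup>2 / (s - t)"
    by (auto simp: eventually_at_filter power2_eq_square)
  ultimately show "((\<lambda>s. (s - t)\<^sup>2 / (s - t)) \<longlongrightarrow> 0) (at t)"
    using tendsto_cong by fastforce
  show "\<forall>\<^sub>F s in at t. s - t \<noteq> 0" by (auto simp: eventually_at_filter)
qed

lemma has_real_derivative_of_quadratic_remainder: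
  assumes "(\<lambda>s. f s - f t - c * (s - t)) \<in> O[at t](\<lambda>s. (s - t)\<^sup>2)"
  shows "(f has_real_derivative c) (at t)"
proof -
  have "((\<lambda>s. (f s - f t - c * (s - t)) / (s - t)) \<longlongrightarrow> 0) (at t)"
    using landau_o.big_small_trans[OF assms square_smallo_at] by (rule smalloD_tendsto)
  then have "((\<lambda>s. (f s - f t - c * (s - t)) / (s - t) + c) \<longlongrightarrow> 0 + c) (at t)"
    by (rule tendsto_add) simp
  moreover have "\<forall>\<^sub>F s in at t. (f s - f t - c * (s - t)) / (s - t) + c = (f s - f t) / (s - t)"
    by (auto simp: eventually_at_filter field_simps)
  ultimately have "((\<lambda>s. (f s - f t) / (s - t)) \<longlongrightarrow> c) (at t)"
    using tendsto_cong by fastforce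
  then show ?thesis by (simp add: has_field_derivative_iff)
qed

text \<open>f(s) = f(t) + A (X s - X t) + B (Y s - Y t) + O((s - t)^2): a first-order expansion of f
  in terms of the Lipschitz, but possibly nowhere differentiable, functions X and Y.\<close>
definition xy_differential ::
  "(real \<Rightarrow> real) \<Rightarrow> (real \<Rightarrow> real) \<Rightarrow> (real \<Rightarrow> real) \<Rightarrow> real \<Rightarrow> real \<Rightarrow> real \<Rightarrow> bool" where
  "xy_differential X Y f t A B \<longleftrightarrow>
     (\<lambda>s. f s - f t - A * (X s - X t) - B * (Y s - Y t)) \<in> O[at t](\<lambda>s. (s - t)\<^sup>2)"

text \<open>Applied first, with the coefficients left schematic: the intro rules below then compute
  a differential, and the two equations compare it with the claimed one.\<close>
lemma xy_differential_coeffs: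
  "xy_differential X Y f t A B \<Longrightarrow> A = A' \<Longrightarrow> B = B' \<Longrightarrow> xy_differential X Y f t A' B'"
  by simp

lemma xy_differential_const: "xy_differential X Y (\<lambda>s. c) t 0 0"
  by (simp add: xy_differential_def)

lemma xy_differential_X: "xy_differential X Y X t 1 0"
  by (simp add: xy_differential_def)

lemma xy_differential_Y: "xy_differential X Y Y t 0 1"
  by (simp add: xy_differential_def)

lemma xy_differential_add:
  assumes "xy_differential X Y f t A1 B1" "xy_differential X Y g t A2 B2"
  shows "xy_differential X Y (\<lambda>s. f s + g s) t (A1 + A2) (B1 + B2)"
  using sum_in_bigo(1)[OF assms[unfolded xy_differential_def]]
  by (simp add: xy_differential_def algebra_simps)

lemma xy_differential_diff:
  assumes "xy_differential X Y f t A1 B1" "xy_differential X Y g t A2 B2"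
  shows "xy_differential X Y (\<lambda>s. f s - g s) t (A1 - A2) (B1 - B2)"
  using sum_in_bigo(2)[OF assms[unfolded xy_differential_def]]
  by (simp add: xy_differential_def algebra_simps)

lemma xy_differential_cmult:
  assumes "xy_differential X Y f t A B"
  shows "xy_differential X Y (\<lambda>s. c * f s) t (c * A) (c * B)"
  using assms by (simp add: xy_differential_def right_diff_distrib[symmetric] mult.assoc)

lemma xy_differential_minus:
  assumes "xy_differential X Y f t A B"
  shows "xy_differential X Y (\<lambda>s. - f s) t (- A) (- B)"
  using xy_differential_cmult[OF assms, of "-1"] by simp

lemma xy_differential_divide:
  assumes "xy_differential X Y f t A B"
  shows "xy_differential X Y (\<lambda>s. f s / c) t (A / c) (B / c)"
  using xy_differential_cmult[OF assms, of "1 / c"] by simp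

lemmas xy_differential_intros =
  xy_differential_const xy_differential_X xy_differential_Y xy_differential_add xy_differential_diff
  xy_differential_cmult xy_differential_minus xy_differential_divide

lemma xy_differential_imp_deriv:
  "xy_differential X Y f t 0 0 \<Longrightarrow> (f has_real_derivative 0) (at t)"
  by (rule has_real_derivative_of_quadratic_remainder) (simp add: xy_differential_def)

locale bounded_velocity_path =
  fixes X Y f1 f2 :: "real \<Rightarrow> real" and R :: real
  assumes ac_X: "ac_sol X f1" and ac_Y: "ac_sol Y f2"
    and bound_f1: "\<And>t. \<bar>f1 t\<bar> \<le> R" and bound_f2: "\<And>t. \<bar>f2 t\<bar> \<le> R"
begin

lemma R_nonneg: "0 \<le> R"
  using bound_f1[of 0] by linarith

lemma increment_bigo_X: "(\<lambda>s. X s - X t) \<in> O[at t](\<lambda>s. s - t)"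
proof (intro bigoI[of _ R] always_eventually allI)
  show "norm (X s - X t) \<le> R * norm (s - t)" for s
    using ac_sol_increment_bound[OF ac_X negligible_empty R_nonneg, of t s] bound_f1 by simp
qed

lemma increment_bigo_Y: "(\<lambda>s. Y s - Y t) \<in> O[at t](\<lambda>s. s - t)"
proof (intro bigoI[of _ R] always_eventually allI)
  show "norm (Y s - Y t) \<le> R * norm (s - t)" for s
    using ac_sol_increment_bound[OF ac_Y negligible_empty R_nonneg, of t s] bound_f2 by simp
qed

lemma increment_bigo:
  assumes "xy_differential X Y f t A B"
  shows "(\<lambda>s. f s - f t) \<in> O[at t](\<lambda>s. s - t)"
proof -
  have "(\<lambda>s. f s - f t - A * (X s - X t) - B * (Y s - Y t)) \<in> O[at t](\<lambda>s. s - t)"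
    using assms landau_o.small_imp_big[OF square_smallo_at]
    unfolding xy_differential_def by (rule landau_o.big_trans)
  moreover have "(\<lambda>s. A * (X s - X t) + B * (Y s - Y t)) \<in> O[at t](\<lambda>s. s - t)"
    using increment_bigo_X increment_bigo_Y by (intro sum_in_bigo(1)) simp_all
  ultimately have "(\<lambda>s. (f s - f t - A * (X s - X t) - B * (Y s - Y t)) + (A * (X s - X t) + B * (Y s - Y t)))
      \<in> O[at t](\<lambda>s. s - t)"
    by (rule sum_in_bigo(1))
  then show ?thesis by simp
qed

lemma xy_differential_mult:
  assumes f: "xy_differential X Y f t A1 B1" and g: "xy_differential X Y g t A2 B2"
  shows "xy_differential X Y (\<lambda>s. f s * g s) t (f t * A2 + g t * A1) (f t * B2 + g t * B1)"
proof -
  let ?Ef = "\<lambda>s. f s - f t - A1 * (X s - X t) - B1 * (Y s - Y t)"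
  let ?Eg = "\<lambda>s. g s - g t - A2 * (X s - X t) - B2 * (Y s - Y t)"
  have "(\<lambda>s. (f s - f t) * (g s - g t)) \<in> O[at t](\<lambda>s. (s - t) * (s - t))"
    using increment_bigo[OF f] increment_bigo[OF g] by (rule landau_o.big.mult)
  moreover have "(\<lambda>s. f t * ?Eg s) \<in> O[at t](\<lambda>s. (s - t)\<^sup>2)" "(\<lambda>s. g t * ?Ef s) \<in> O[at t](\<lambda>s. (s - t)\<^sup>2)"
    using f g by (simp_all add: xy_differential_def)
  ultimately have "(\<lambda>s. f t * ?Eg s + g t * ?Ef s + (f s - f t) * (g s - g t)) \<in> O[at t](\<lambda>s. (s - t)\<^sup>2)"
    by (intro sum_in_bigo(1)) (simp_all add: power2_eq_square)
  then show ?thesis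
    unfolding xy_differential_def by (simp add: algebra_simps)
qed

lemma xy_differential_imp_isCont:
  assumes "xy_differential X Y f t A B" shows "isCont f t"
proof -
  obtain c where "\<forall>\<^sub>F s in at t. norm (f s - f t) \<le> c * norm (s - t)"
    using increment_bigo[OF assms] by (rule landau_o.bigE)
  moreover have "((\<lambda>s. c * norm (s - t)) \<longlongrightarrow> c * norm (t - t)) (at t)"
    by (intro tendsto_intros)
  ultimately have "((\<lambda>s. f s - f t) \<longlongrightarrow> 0) (at t)" by (simp add: Lim_null_comparison)
  then show ?thesis by (simp add: isCont_def LIM_zero_iff)
qed

lemma xy_differential_local_lipschitz:
  assumes "xy_differential X Y k t A B"
  obtains c \<delta> where "0 < c" "0 < \<delta>" "\<And>\<sigma>. \<bar>\<sigma> - t\<bar> < \<delta> \<Longrightarrow> \<bar>k \<sigma> - k t\<bar> \<le> c * \<bar>\<sigma> - t\<bar>"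
proof -
  obtain c where "0 < c" "\<forall>\<^sub>F \<sigma> in at t. norm (k \<sigma> - k t) \<le> c * norm (\<sigma> - t)"
    using increment_bigo[OF assms] by (rule landau_o.bigE)
  then obtain \<delta> where "0 < \<delta>" "\<And>\<sigma>. \<sigma> \<noteq> t \<Longrightarrow> \<bar>\<sigma> - t\<bar> < \<delta> \<Longrightarrow> \<bar>k \<sigma> - k t\<bar> \<le> c * \<bar>\<sigma> - t\<bar>"
    unfolding eventually_at by (auto simp: dist_real_def)
  moreover have "\<bar>k t - k t\<bar> \<le> c * \<bar>t - t\<bar>" by simp
  ultimately show ?thesis using that \<open>0 < c\<close> by metis
qed

lemma xy_differential_integral:
  assumes ac: "ac_sol P q" and "negligible N"
    and q: "\<And>\<sigma>. \<sigma> \<notin> N \<Longrightarrow> q \<sigma> = k1 \<sigma> * f1 \<sigma> + k2 \<sigma> * f2 \<sigma>"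
    and k1: "xy_differential X Y k1 t A1 B1" and k2: "xy_differential X Y k2 t A2 B2"
  shows "xy_differential X Y P t (k1 t) (k2 t)"
proof -
  obtain c1 \<delta>1 where c1: "0 < c1" "0 < \<delta>1" "\<And>\<sigma>. \<bar>\<sigma> - t\<bar> < \<delta>1 \<Longrightarrow> \<bar>k1 \<sigma> - k1 t\<bar> \<le> c1 * \<bar>\<sigma> - t\<bar>"
    using xy_differential_local_lipschitz[OF k1] by blast
  obtain c2 \<delta>2 where c2: "0 < c2" "0 < \<delta>2" "\<And>\<sigma>. \<bar>\<sigma> - t\<bar> < \<delta>2 \<Longrightarrow> \<bar>k2 \<sigma> - k2 t\<bar> \<le> c2 * \<bar>\<sigma> - t\<bar>"
    using xy_differential_local_lipschitz[OF k2] by blast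
  define Q where "Q s = P s - k1 t * X s - k2 t * Y s" for s
  have ac_Q: "ac_sol Q (\<lambda>\<sigma>. q \<sigma> - k1 t * f1 \<sigma> - k2 t * f2 \<sigma>)"
    unfolding Q_def by (intro ac_sol_diff ac_sol_cmult ac ac_X ac_Y)
  have integrand: "\<bar>q \<sigma> - k1 t * f1 \<sigma> - k2 t * f2 \<sigma>\<bar> \<le> (c1 + c2) * R * \<bar>\<sigma> - t\<bar>"
    if "\<sigma> \<notin> N" "\<bar>\<sigma> - t\<bar> < min \<delta>1 \<delta>2" for \<sigma>
  proof -
    have "q \<sigma> - k1 t * f1 \<sigma> - k2 t * f2 \<sigma> = (k1 \<sigma> - k1 t) * f1 \<sigma> + (k2 \<sigma> - k2 t) * f2 \<sigma>"
      using q[OF that(1)] by (simp add: algebra_simps)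
    then have "\<bar>q \<sigma> - k1 t * f1 \<sigma> - k2 t * f2 \<sigma>\<bar> \<le> \<bar>k1 \<sigma> - k1 t\<bar> * \<bar>f1 \<sigma>\<bar> + \<bar>k2 \<sigma> - k2 t\<bar> * \<bar>f2 \<sigma>\<bar>"
      by (simp add: abs_mult[symmetric] abs_triangle_ineq)
    also have "\<dots> \<le> c1 * \<bar>\<sigma> - t\<bar> * R + c2 * \<bar>\<sigma> - t\<bar> * R"
      using c1 c2 that(2) bound_f1[of \<sigma>] bound_f2[of \<sigma>] by (intro add_mono mult_mono) auto
    finally show ?thesis by (simp add: algebra_simps)
  qed
  have "\<bar>Q s - Q t\<bar> \<le> (c1 + c2) * R * \<bar>s - t\<bar> * \<bar>s - t\<bar>" if "\<bar>s - t\<bar> < min \<delta>1 \<delta>2" for s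
  proof (rule ac_sol_increment_bound[OF ac_Q \<open>negligible N\<close>])
    show "0 \<le> (c1 + c2) * R * \<bar>s - t\<bar>" using c1 c2 R_nonneg by simp
    fix \<sigma> assume "\<sigma> \<notin> N" "\<sigma> \<in> closed_segment t s"
    then have "\<bar>\<sigma> - t\<bar> \<le> \<bar>s - t\<bar>" by (auto simp: closed_segment_eq_real_ivl split: if_splits)
    moreover from this have "(c1 + c2) * R * \<bar>\<sigma> - t\<bar> \<le> (c1 + c2) * R * \<bar>s - t\<bar>"
      using c1(1) c2(1) R_nonneg by (intro mult_left_mono) auto
    ultimately show "\<bar>q \<sigma> - k1 t * f1 \<sigma> - k2 t * f2 \<sigma>\<bar> \<le> (c1 + c2) * R * \<bar>s - t\<bar>"
      using integrand[OF \<open>\<sigma> \<notin> N\<close>] that by fastforce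
  qed
  moreover have "Q s - Q t = P s - P t - k1 t * (X s - X t) - k2 t * (Y s - Y t)" for s
    by (simp add: Q_def algebra_simps)
  ultimately have "\<forall>\<^sub>F s in at t. norm (P s - P t - k1 t * (X s - X t) - k2 t * (Y s - Y t))
      \<le> ((c1 + c2) * R) * norm ((s - t)\<^sup>2)"
    unfolding eventually_at using c1(2) c2(2)
    by (intro exI[of _ "min \<delta>1 \<delta>2"]) (simp add: dist_real_def power2_eq_square abs_mult mult.assoc)
  then show ?thesis
    unfolding xy_differential_def by (rule bigoI)
qed

end

section \<open>The sign of a derivative as a function leaves an endpoint of its range\<close>

lemma MVT_open_segment:
  fixes f :: "real \<Rightarrow> real"
  assumes "\<And>t. (f has_real_derivative f' t) (at t)" "a \<noteq> b"
  obtains \<xi> where "\<xi> \<in> open_segment a b" "f b - f a = (b - a) * f' \<xi>"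
proof (cases "a < b")
  case True
  then show ?thesis using MVT2[OF True assms(1)] that by (fastforce simp: open_segment_eq_real_ivl)
next
  case False
  then have "b < a" using assms(2) by simp
  then show ?thesis using MVT2[OF \<open>b < a\<close> assms(1)] that
    by (fastforce simp: open_segment_eq_real_ivl open_segment_commute algebra_simps)
qed

lemma continuous_nonzero_same_sign:
  fixes D :: "real \<Rightarrow> real"
  assumes "\<And>t. isCont D t" "\<And>t. t \<in> closed_segment p q \<Longrightarrow> D t \<noteq> 0"
  shows "0 < D p * D q"
proof (rule ccontr)
  assume "\<not> 0 < D p * D q"
  then have "D p \<le> 0 \<and> 0 \<le> D q \<or> D q \<le> 0 \<and> 0 \<le> D p" by (auto simp: mult_le_0_iff not_less)
  moreover have "continuous_on (closed_segment p q) D"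
    using assms(1) by (simp add: continuous_at_imp_continuous_on)
  ultimately obtain c where "c \<in> closed_segment p q" "D c = 0"
    using IVT'[of D p 0 q] IVT2'[of D q 0 p] IVT'[of D q 0 p] IVT2'[of D p 0 q]
    by (cases "p \<le> q") (auto simp: closed_segment_eq_real_ivl closed_segment_commute)
  then show False using assms(2) by blast
qed

lemma open_segment_real_subset: "t \<in> open_segment a b \<Longrightarrow> open_segment a t \<subseteq> open_segment (a::real) b"
  by (cases "a \<le> b"; cases "a \<le> t") (auto simp: open_segment_eq_real_ivl)

lemma deriv_sign_on_open_segment:
  fixes \<theta> D :: "real \<Rightarrow> real"
  assumes der: "\<And>t. (\<theta> has_real_derivative D t) (at t)" and cont: "\<And>t. isCont D t"
    and nonzero: "\<And>t. t \<in> open_segment t0 t1 \<Longrightarrow> D t \<noteq> 0"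
    and away: "\<And>t. t \<in> open_segment t0 t1 \<Longrightarrow> 0 < \<sigma> * (\<theta> t - \<theta> t0)"
    and t: "t \<in> open_segment t0 t1"
  shows "0 < \<sigma> * D t * (t - t0)"
proof -
  have "t \<noteq> t0" using t by (auto simp: open_segment_def)
  then obtain \<xi> where \<xi>: "\<xi> \<in> open_segment t0 t" "\<theta> t - \<theta> t0 = (t - t0) * D \<xi>"
    using MVT_open_segment[OF der] by metis
  then have "\<xi> \<in> open_segment t0 t1" using open_segment_real_subset[OF t] by blast
  then have "closed_segment t \<xi> \<subseteq> open_segment t0 t1"
    using t by (intro closed_segment_subset convex_open_segment)
  then have "0 < D t * D \<xi>" using cont nonzero by (intro continuous_nonzero_same_sign) auto
  moreover have "0 < \<sigma> * ((t - t0) * D \<xi>)" using away[OF t] \<xi>(2) by simp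
  ultimately have "0 < (\<sigma> * D t * (t - t0)) * (D \<xi> * D \<xi>)"
    using mult_pos_pos by (fastforce simp: ac_simps)
  then show ?thesis using zero_le_square[of "D \<xi>"] by (auto simp: zero_less_mult_iff)
qed

lemma open_segment_eq_directed:
  fixes t t0 \<tau> \<delta> :: real
  assumes "\<tau> = 1 \<or> \<tau> = -1" "0 < \<delta>"
  shows "t \<in> open_segment t0 (t0 + \<tau> * \<delta>) \<longleftrightarrow> 0 < \<tau> * (t - t0) \<and> \<tau> * (t - t0) < \<delta>"
  using assms by (auto simp: open_segment_eq_real_ivl)

text \<open>\<tau> = 1 looks at times after t0 and \<tau> = -1 at times before; \<sigma> = 1 if \<theta>(t0) is the lower
  endpoint a of the range and \<sigma> = -1 if it is the upper endpoint b.\<close>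
lemma deriv_sign_leaving_endpoint:
  fixes \<theta> D :: "real \<Rightarrow> real"
  assumes der: "\<And>t. (\<theta> has_real_derivative D t) (at t)" and cont: "\<And>t. isCont D t"
    and nonzero: "\<And>t. a < \<theta> t \<Longrightarrow> \<theta> t < b \<Longrightarrow> D t \<noteq> 0"
    and range: "\<And>t. a \<le> \<theta> t \<and> \<theta> t \<le> b"
    and endpoint: "\<theta> t0 = a \<and> \<sigma> = 1 \<or> \<theta> t0 = b \<and> \<sigma> = -1" and side: "\<tau> = 1 \<or> \<tau> = -1"
    and "0 < \<delta>1" and leaves: "\<And>t. 0 < \<tau> * (t - t0) \<Longrightarrow> \<tau> * (t - t0) < \<delta>1 \<Longrightarrow> \<theta> t \<noteq> \<theta> t0"
  shows "\<exists>\<delta>>0. \<forall>t. 0 < \<tau> * (t - t0) \<and> \<tau> * (t - t0) < \<delta> \<longrightarrow> 0 < \<sigma> * D t * (t - t0)"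
proof -
  have "\<theta> (t0 + \<tau> * (\<delta>1 / 2)) \<noteq> \<theta> t0" using side \<open>0 < \<delta>1\<close> by (intro leaves) auto
  then have "a < b" using range[of "t0 + \<tau> * (\<delta>1 / 2)"] range[of t0] endpoint by auto
  have "isCont (\<lambda>t. (b - a) - \<bar>\<theta> t - \<theta> t0\<bar>) t0"
    using DERIV_isCont[OF der] by (intro continuous_intros)
  moreover have "0 < (b - a) - \<bar>\<theta> t0 - \<theta> t0\<bar>" using \<open>a < b\<close> by simp
  ultimately obtain \<delta>2 where "0 < \<delta>2" and \<delta>2: "\<And>t. \<bar>t - t0\<bar> < \<delta>2 \<Longrightarrow> \<bar>\<theta> t - \<theta> t0\<bar> < b - a"
    by (rule isCont_pos_nbhd) auto
  let ?\<delta> = "min \<delta>1 \<delta>2"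
  have inside: "a < \<theta> s \<and> \<theta> s < b" if "s \<in> open_segment t0 (t0 + \<tau> * ?\<delta>)" for s
  proof -
    have s: "0 < \<tau> * (s - t0)" "\<tau> * (s - t0) < ?\<delta>"
      using that open_segment_eq_directed[OF side] \<open>0 < \<delta>1\<close> \<open>0 < \<delta>2\<close> by auto
    then have "\<bar>s - t0\<bar> < \<delta>2" using side by auto
    then have "\<theta> s \<noteq> \<theta> t0" "\<bar>\<theta> s - \<theta> t0\<bar> < b - a" using leaves s \<delta>2 by auto
    then show ?thesis using range[of s] endpoint by (auto simp: abs_less_iff)
  qed
  have "0 < \<sigma> * D t * (t - t0)" if "t \<in> open_segment t0 (t0 + \<tau> * ?\<delta>)" for t
    using that inside nonzero endpoint
    by (intro deriv_sign_on_open_segment[OF der cont, of t0 "t0 + \<tau> * ?\<delta>"]) auto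
  then show ?thesis
    using open_segment_eq_directed[OF side] \<open>0 < \<delta>1\<close> \<open>0 < \<delta>2\<close> by (intro exI[of _ ?\<delta>]) auto
qed

lemma deriv_sign_at_endpoints:
  fixes \<theta> D :: "real \<Rightarrow> real"
  assumes der: "\<And>t. (\<theta> has_real_derivative D t) (at t)" and cont: "\<And>t. isCont D t"
    and nonzero: "\<And>t. a < \<theta> t \<Longrightarrow> \<theta> t < b \<Longrightarrow> D t \<noteq> 0"
    and range: "\<And>t. a \<le> \<theta> t \<and> \<theta> t \<le> b"
  shows
   "(\<forall>t0. \<theta> t0 = a \<longrightarrow>
        ((\<exists>\<delta>>0. \<forall>t. t0 < t \<and> t < t0 + \<delta> \<longrightarrow> \<theta> t \<noteq> a) \<longrightarrow>
           (\<exists>\<delta>>0. \<forall>t. t0 < t \<and> t < t0 + \<delta> \<longrightarrow>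
               \<theta> differentiable (at t) \<and> deriv \<theta> t * (t - t0) > 0))
      \<and> ((\<exists>\<delta>>0. \<forall>t. t0 - \<delta> < t \<and> t < t0 \<longrightarrow> \<theta> t \<noteq> a) \<longrightarrow>
           (\<exists>\<delta>>0. \<forall>t. t0 - \<delta> < t \<and> t < t0 \<longrightarrow>
               \<theta> differentiable (at t) \<and> deriv \<theta> t * (t - t0) > 0)))
  \<and> (\<forall>t0. \<theta> t0 = b \<longrightarrow>
        ((\<exists>\<delta>>0. \<forall>t. t0 < t \<and> t < t0 + \<delta> \<longrightarrow> \<theta> t \<noteq> b) \<longrightarrow>
           (\<exists>\<delta>>0. \<forall>t. t0 < t \<and> t < t0 + \<delta> \<longrightarrow>
               \<theta> differentiable (at t) \<and> deriv \<theta> t * (t - t0) < 0))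
      \<and> ((\<exists>\<delta>>0. \<forall>t. t0 - \<delta> < t \<and> t < t0 \<longrightarrow> \<theta> t \<noteq> b) \<longrightarrow>
           (\<exists>\<delta>>0. \<forall>t. t0 - \<delta> < t \<and> t < t0 \<longrightarrow>
               \<theta> differentiable (at t) \<and> deriv \<theta> t * (t - t0) < 0)))"
proof -
  have "\<theta> differentiable (at t)" "deriv \<theta> t = D t" for t
    using der[of t] by (auto simp: real_differentiable_def DERIV_imp_deriv)
  then have side: "(\<exists>\<delta>>0. \<forall>t. 0 < \<tau> * (t - t0) \<and> \<tau> * (t - t0) < \<delta> \<longrightarrow> \<theta> t \<noteq> \<theta> t0) \<longrightarrow>
      (\<exists>\<delta>>0. \<forall>t. 0 < \<tau> * (t - t0) \<and> \<tau> * (t - t0) < \<delta> \<longrightarrow>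
        \<theta> differentiable (at t) \<and> 0 < \<sigma> * (deriv \<theta> t * (t - t0)))"
    if "\<theta> t0 = a \<and> \<sigma> = 1 \<or> \<theta> t0 = b \<and> \<sigma> = -1" "\<tau> = 1 \<or> \<tau> = -1" for t0 \<sigma> \<tau>
    using deriv_sign_leaving_endpoint[OF der cont nonzero range that] by (auto simp: mult.assoc)
  have right: "t0 < t \<and> t < t0 + \<delta> \<longleftrightarrow> 0 < 1 * (t - t0) \<and> 1 * (t - t0) < \<delta>"
    and left: "t0 - \<delta> < t \<and> t < t0 \<longleftrightarrow> 0 < -1 * (t - t0) \<and> -1 * (t - t0) < \<delta>"
    and pos: "0 < 1 * r \<longleftrightarrow> r > 0" and neg: "0 < -1 * r \<longleftrightarrow> r < 0" for t0 t \<delta> r :: real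
    by auto
  show ?thesis
    unfolding right left
    using side[of _ 1 1] side[of _ 1 "-1"] side[of _ "-1" 1] side[of _ "-1" "-1"]
    by (simp only: pos neg) auto
qed

section \<open>The angle along a normal extremal\<close>

lemma has_real_derivative_of_sin_increment:
  fixes \<theta> :: "real \<Rightarrow> real"
  assumes sin_deriv: "((\<lambda>s. sin (\<theta> s - \<theta> t)) has_real_derivative D) (at t)" and "isCont \<theta> t"
  shows "(\<theta> has_real_derivative D) (at t)"
proof -
  have "((\<lambda>s. \<theta> t + arcsin (sin (\<theta> s - \<theta> t))) has_real_derivative 0 + 1 * D) (at t)"
    using DERIV_arcsin[of 0] by (intro DERIV_add DERIV_const DERIV_chain2[OF _ sin_deriv]) simp_all
  then have arcsin_deriv: "((\<lambda>s. \<theta> t + arcsin (sin (\<theta> s - \<theta> t))) has_real_derivative D) (at t)"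
    by simp
  have "isCont (\<lambda>s. pi / 2 - \<bar>\<theta> s - \<theta> t\<bar>) t" using assms(2) by (intro continuous_intros)
  moreover have "0 < pi / 2 - \<bar>\<theta> t - \<theta> t\<bar>" by simp
  ultimately obtain \<delta> where "0 < \<delta>" and \<delta>: "\<And>s. \<bar>s - t\<bar> < \<delta> \<Longrightarrow> 0 < pi / 2 - \<bar>\<theta> s - \<theta> t\<bar>"
    by (rule isCont_pos_nbhd) blast
  show ?thesis
  proof (rule has_field_derivative_transform_within_open[OF arcsin_deriv open_ball])
    show "t \<in> ball t \<delta>" using \<open>0 < \<delta>\<close> by simp
    fix s assume "s \<in> ball t \<delta>"
    then have "\<bar>\<theta> s - \<theta> t\<bar> < pi / 2" using \<delta>[of s] by (simp add: dist_real_def abs_minus_commute)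
    then have "arcsin (sin (\<theta> s - \<theta> t)) = \<theta> s - \<theta> t"
      unfolding abs_less_iff by (intro arcsin_sin) linarith+
    then show "\<theta> t + arcsin (sin (\<theta> s - \<theta> t)) = \<theta> s" by simp
  qed
qed

lemma has_real_derivative_mult_vanishing:
  assumes "(f has_real_derivative c) (at t)" "f t = 0" "isCont g t"
  shows "((\<lambda>s. f s * g s) has_real_derivative c * g t) (at t)"
proof -
  have "((\<lambda>s. (f s - f t) / (s - t) * g s) \<longlongrightarrow> c * g t) (at t)"
    using assms(1,3) by (intro tendsto_mult) (simp_all add: has_field_derivative_iff isCont_def)
  then show ?thesis using assms(2) by (simp add: has_field_derivative_iff)
qed

locale normal_extremal_angle = planar_norm F m M for F m M +
  fixes u :: "real \<Rightarrow> real \<times> real" and x y z v p1 p2 p3 p4 \<theta> :: "real \<Rightarrow> real"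
  assumes extremal: "normal_extremal F u x y z v p1 p2 p3 p4"
    and angle: "angle_fun F (\<lambda>t. ham1 (p1 t) (p3 t) (p4 t) (x t) (y t) (z t))
      (\<lambda>t. ham2 (p2 t) (p3 t) (p4 t) (x t)) \<theta>"
begin

definition h1 :: "real \<Rightarrow> real" where "h1 t = ham1 (p1 t) (p3 t) (p4 t) (x t) (y t) (z t)"
definition h2 :: "real \<Rightarrow> real" where "h2 t = ham2 (p2 t) (p3 t) (p4 t) (x t)"

text \<open>Since p3 = \<phi>3 + \<phi>4 x / 2 along the extremal, w is the paper's \<phi>3 + \<phi>4 x; it equals
  r(\<theta>)^2 \<theta>'.\<close>
definition w :: "real \<Rightarrow> real" where "w t = p3 t + p4 t * x t / 2"

lemma control_bounds: "\<bar>fst (u t)\<bar> \<le> 1 / m" "\<bar>snd (u t)\<bar> \<le> 1 / m"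
proof -
  have "norm (u t) \<le> 1 / m"
    using extremal Uset_norm_le unfolding normal_extremal_def by blast
  moreover have "\<bar>fst (u t)\<bar> \<le> norm (u t)" "\<bar>snd (u t)\<bar> \<le> norm (u t)"
    by (cases "u t"; simp add: norm_Pair)+
  ultimately show "\<bar>fst (u t)\<bar> \<le> 1 / m" "\<bar>snd (u t)\<bar> \<le> 1 / m" by linarith+
qed

lemma ac_sols:
  "ac_sol x (\<lambda>t. fst (u t))" "ac_sol y (\<lambda>t. snd (u t))"
  "ac_sol z (\<lambda>t. (x t * snd (u t) - y t * fst (u t)) / 2)"
  "ac_sol p1 (\<lambda>t. p4 t * y t * fst (u t) / 12 - (p3 t / 2 + p4 t * x t / 6) * snd (u t))"
  "ac_sol p2 (\<lambda>t. (p3 t / 2 + p4 t * x t / 12) * fst (u t))"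
  "ac_sol p3 (\<lambda>t. p4 t * fst (u t) / 2)"
  "ac_sol p4 (\<lambda>t. 0)"
  using extremal unfolding normal_extremal_def by auto

sublocale path: bounded_velocity_path x y "\<lambda>t. fst (u t)" "\<lambda>t. snd (u t)" "1 / m"
  using ac_sols control_bounds by unfold_locales

lemma p4_differential: "xy_differential x y p4 t 0 0"
  by (rule path.xy_differential_integral[OF ac_sols(7) negligible_empty, of "\<lambda>_. 0" "\<lambda>_. 0"])
    (auto intro: xy_differential_const)

lemma p4_const: "p4 t = p4 0"
  using DERIV_isconst_all xy_differential_imp_deriv[OF p4_differential] by blast

lemma p3_differential: "xy_differential x y p3 t (p4 t / 2) 0"
  by (rule path.xy_differential_integral[OF ac_sols(6) negligible_empty, of "\<lambda>s. p4 s / 2" "\<lambda>_. 0"])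
    (auto intro: xy_differential_intros p4_differential)

lemmas differential_intros = xy_differential_intros path.xy_differential_mult p4_differential p3_differential

lemma p2_differential: "xy_differential x y p2 t (p3 t / 2 + p4 t * x t / 12) 0"
  by (rule path.xy_differential_integral[OF ac_sols(5) negligible_empty,
        of "\<lambda>s. p3 s / 2 + p4 s * x s / 12" "\<lambda>_. 0"], simp, (rule differential_intros)+)

lemma p1_differential: "xy_differential x y p1 t (p4 t * y t / 12) (- (p3 t / 2 + p4 t * x t / 6))"
  by (rule path.xy_differential_integral[OF ac_sols(4) negligible_empty,
        of "\<lambda>s. p4 s * y s / 12" "\<lambda>s. - (p3 s / 2 + p4 s * x s / 6)"],
      simp add: algebra_simps, (rule differential_intros)+)

lemma z_differential: "xy_differential x y z t (- y t / 2) (x t / 2)"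
  by (rule path.xy_differential_integral[OF ac_sols(3) negligible_empty,
        of "\<lambda>s. - y s / 2" "\<lambda>s. x s / 2"],
      simp add: field_simps, (rule differential_intros)+)

lemma h2_differential: "xy_differential x y h2 t (w t) 0"
  unfolding h2_def[abs_def] ham2_def power2_eq_square
  by (rule xy_differential_coeffs, (rule differential_intros p2_differential)+)
    (simp_all add: w_def p4_const[of t] field_simps)

lemma h1_differential: "xy_differential x y h1 t 0 (- w t)"
  unfolding h1_def[abs_def] ham1_def
  by (rule xy_differential_coeffs, (rule differential_intros p1_differential z_differential)+)
    (simp_all add: w_def p4_const[of t] field_simps)

lemma w_differential: "xy_differential x y w t (p4 t) 0"
  unfolding w_def[abs_def]
  by (rule xy_differential_coeffs, (rule differential_intros)+)
    (simp_all add: p4_const[of t] field_simps)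

lemma first_integral: "(w t)\<^sup>2 = (p3 0)\<^sup>2 + 2 * p4 0 * (h2 t - p2 0)"
proof -
  define D where "D s = w s * w s - 2 * p4 s * h2 s" for s
  have "xy_differential x y D s 0 0" for s
    unfolding D_def[abs_def]
    by (rule xy_differential_coeffs, (rule differential_intros w_differential h2_differential)+)
      (simp_all add: field_simps)
  then have "D t = D 0"
    using DERIV_isconst_all xy_differential_imp_deriv by blast
  moreover have "w 0 = p3 0" "h2 0 = p2 0"
    using extremal by (simp_all add: w_def h2_def ham2_def normal_extremal_def)
  ultimately show ?thesis
    using p4_const[of t] by (simp add: D_def power2_eq_square algebra_simps)
qed

lemma hamiltonian_eq_one_ae: "\<exists>N. negligible N \<and> (\<forall>t. t \<notin> N \<longrightarrow> h1 t * fst (u t) + h2 t * snd (u t) = 1)"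
proof -
  have "AE t in lborel. h1 t * fst (u t) + h2 t * snd (u t) = FU F (h1 t, h2 t) \<and> FU F (h1 t, h2 t) = 1"
    using extremal unfolding normal_extremal_def h1_def h2_def by blast
  then have "AE t in lborel. h1 t * fst (u t) + h2 t * snd (u t) = 1"
    by (rule eventually_mono) simp
  then obtain N where N: "{t. h1 t * fst (u t) + h2 t * snd (u t) \<noteq> 1} \<subseteq> N" "N \<in> null_sets lborel"
    by (auto elim!: AE_E simp: null_sets_def)
  then have "negligible N" using negligible_iff_null_sets null_sets_completionI by blast
  then show ?thesis using N(1) by blast
qed

lemma time_differential: "xy_differential x y (\<lambda>s. s) t (h1 t) (h2 t)"
proof -
  obtain N where "negligible N" "\<And>t. t \<notin> N \<Longrightarrow> h1 t * fst (u t) + h2 t * snd (u t) = 1"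
    using hamiltonian_eq_one_ae by blast
  then show ?thesis
    using path.xy_differential_integral[OF ac_sol_id _ _ h1_differential h2_differential] by metis
qed

text \<open>dh1 = -w dy and dh2 = w dx, while h1 dx + h2 dy = dt by the maximum condition.\<close>
lemma cross_product_deriv: "((\<lambda>s. h1 t * h2 s - h2 t * h1 s) has_real_derivative w t) (at t)"
proof -
  have "xy_differential x y (\<lambda>s. h1 t * h2 s - h2 t * h1 s - w t * s) t 0 0"
    by (rule xy_differential_coeffs,
        (rule differential_intros h1_differential h2_differential time_differential)+)
      (simp_all add: algebra_simps)
  moreover have "((\<lambda>s. w t * s) has_real_derivative w t) (at t)"
    by (auto intro!: derivative_eq_intros)
  ultimately have "((\<lambda>s. (h1 t * h2 s - h2 t * h1 s - w t * s) + w t * s) has_real_derivative 0 + w t) (at t)"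
    by (intro DERIV_add xy_differential_imp_deriv)
  then show ?thesis by simp
qed

lemma h_polar: "h1 t = rr F (\<theta> t) * cos (\<theta> t)" "h2 t = rr F (\<theta> t) * sin (\<theta> t)"
  using angle unfolding angle_fun_def h1_def h2_def by auto

lemma isCont_theta: "isCont \<theta> t"
  using angle continuous_on_eq_continuous_at unfolding angle_fun_def by blast

text \<open>sin (\<theta> s - \<theta> t) is the cross product above divided by r(\<theta> t) r(\<theta> s).\<close>
lemma theta_deriv: "(\<theta> has_real_derivative w t / (rr F (\<theta> t))\<^sup>2) (at t)"
proof (rule has_real_derivative_of_sin_increment[OF _ isCont_theta])
  define G where "G s = 1 / (rr F (\<theta> t) * rr F (\<theta> s))" for s
  have "isCont G t"
    unfolding G_def using rr_pos isCont_o2[OF isCont_theta isCont_rr]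
    by (intro continuous_intros) (auto simp: less_imp_neq[symmetric])
  then have "((\<lambda>s. (h1 t * h2 s - h2 t * h1 s) * G s) has_real_derivative w t * G t) (at t)"
    using has_real_derivative_mult_vanishing[OF cross_product_deriv] by simp
  moreover have "(h1 t * h2 s - h2 t * h1 s) * G s = sin (\<theta> s - \<theta> t)" for s
    using rr_pos[of "\<theta> t"] rr_pos[of "\<theta> s"]
    by (simp add: G_def h_polar sin_diff field_simps)
  ultimately show "((\<lambda>s. sin (\<theta> s - \<theta> t)) has_real_derivative w t / (rr F (\<theta> t))\<^sup>2) (at t)"
    by (simp add: G_def power2_eq_square)
qed

lemma theta_deriv_squared: "(w t / (rr F (\<theta> t))\<^sup>2)\<^sup>2 = Phi F (p2 0) (p3 0) (p4 0) (\<theta> t)"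
  using first_integral[of t] by (simp add: Phi_def h_polar power_divide flip: power_mult)

lemma isCont_theta_deriv: "isCont (\<lambda>t. w t / (rr F (\<theta> t))\<^sup>2) t"
  using path.xy_differential_imp_isCont[OF w_differential] isCont_o2[OF isCont_theta isCont_rr]
    rr_pos[of "\<theta> t"] by (intro continuous_intros) auto

end

theorem lemma2:
  fixes F :: "real \<times> real \<Rightarrow> real" and u :: "real \<Rightarrow> real \<times> real"
    and x y z v p1 p2 p3 p4 \<theta> :: "real \<Rightarrow> real" and \<Theta>1 \<Theta>2 :: real
  assumes norm: "is_norm2 F"
    and ext: "normal_extremal F u x y z v p1 p2 p3 p4"
    and ang: "angle_fun F (\<lambda>t. ham1 (p1 t) (p3 t) (p4 t) (x t) (y t) (z t))
                          (\<lambda>t. ham2 (p2 t) (p3 t) (p4 t) (x t)) \<theta>"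
    and phi4: "p4 0 \<noteq> 0"
    and lt: "\<Theta>1 < \<Theta>2"
    and pos: "\<forall>s. \<Theta>1 < s \<and> s < \<Theta>2 \<longrightarrow> Phi F (p2 0) (p3 0) (p4 0) s > 0"
    and z1: "Phi F (p2 0) (p3 0) (p4 0) \<Theta>1 = 0"
    and z2: "Phi F (p2 0) (p3 0) (p4 0) \<Theta>2 = 0"
    and range: "\<forall>t. \<Theta>1 \<le> \<theta> t \<and> \<theta> t \<le> \<Theta>2"
  shows
   "(\<exists>\<epsilon>>0. \<forall>s d. \<Theta>1 < s \<and> s < \<Theta>2 \<and> s < \<Theta>1 + \<epsilon> \<and> is_rprime F s d
        \<longrightarrow> p4 0 * u1fun F s d > 0)
  \<and> (\<exists>\<epsilon>>0. \<forall>s d. \<Theta>1 < s \<and> s < \<Theta>2 \<and> \<Theta>2 - \<epsilon> < s \<and> is_rprime F s d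
        \<longrightarrow> p4 0 * u1fun F s d < 0)
  \<and> (\<forall>t0. \<theta> t0 = \<Theta>1 \<longrightarrow>
        ((\<exists>\<delta>>0. \<forall>t. t0 < t \<and> t < t0 + \<delta> \<longrightarrow> \<theta> t \<noteq> \<Theta>1) \<longrightarrow>
           (\<exists>\<delta>>0. \<forall>t. t0 < t \<and> t < t0 + \<delta> \<longrightarrow>
               \<theta> differentiable (at t) \<and> deriv \<theta> t * (t - t0) > 0))
      \<and> ((\<exists>\<delta>>0. \<forall>t. t0 - \<delta> < t \<and> t < t0 \<longrightarrow> \<theta> t \<noteq> \<Theta>1) \<longrightarrow>
           (\<exists>\<delta>>0. \<forall>t. t0 - \<delta> < t \<and> t < t0 \<longrightarrow>
               \<theta> differentiable (at t) \<and> deriv \<theta> t * (t - t0) > 0)))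
  \<and> (\<forall>t0. \<theta> t0 = \<Theta>2 \<longrightarrow>
        ((\<exists>\<delta>>0. \<forall>t. t0 < t \<and> t < t0 + \<delta> \<longrightarrow> \<theta> t \<noteq> \<Theta>2) \<longrightarrow>
           (\<exists>\<delta>>0. \<forall>t. t0 < t \<and> t < t0 + \<delta> \<longrightarrow>
               \<theta> differentiable (at t) \<and> deriv \<theta> t * (t - t0) < 0))
      \<and> ((\<exists>\<delta>>0. \<forall>t. t0 - \<delta> < t \<and> t < t0 \<longrightarrow> \<theta> t \<noteq> \<Theta>2) \<longrightarrow>
           (\<exists>\<delta>>0. \<forall>t. t0 - \<delta> < t \<and> t < t0 \<longrightarrow>
               \<theta> differentiable (at t) \<and> deriv \<theta> t * (t - t0) < 0)))"
proof -
  obtain m where "0 < m" "\<And>w. m * norm w \<le> F w" using norm2_bounded_below[OF norm] by blast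
  then interpret normal_extremal_angle F m "F (1,0) + F (0,1)" u x y z v p1 p2 p3 p4 \<theta>
    using norm ext ang norm2_le_coordinate_sum by unfold_locales auto
  obtain \<epsilon>1 where "0 < \<epsilon>1" and \<epsilon>1: "\<forall>s d. 0 < 1 * (s - \<Theta>1) \<and> 1 * (s - \<Theta>1) < \<epsilon>1
      \<and> is_rprime F s d \<longrightarrow> 0 < 1 * (p4 0 * u1fun F s d)"
    using u1_sign_near_endpoint[of 1 "\<Theta>2 - \<Theta>1" \<Theta>1 "p4 0"] lt pos rsin_above_endpoint[OF z1] by auto
  obtain \<epsilon>2 where "0 < \<epsilon>2" and \<epsilon>2: "\<forall>s d. 0 < -1 * (s - \<Theta>2) \<and> -1 * (s - \<Theta>2) < \<epsilon>2
      \<and> is_rprime F s d \<longrightarrow> 0 < -1 * (p4 0 * u1fun F s d)"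
    using u1_sign_near_endpoint[of "-1" "\<Theta>2 - \<Theta>1" \<Theta>2 "p4 0"] lt pos rsin_above_endpoint[OF z2] by auto
  have P1: "\<exists>\<epsilon>>0. \<forall>s d. \<Theta>1 < s \<and> s < \<Theta>2 \<and> s < \<Theta>1 + \<epsilon> \<and> is_rprime F s d
      \<longrightarrow> p4 0 * u1fun F s d > 0"
    using \<open>0 < \<epsilon>1\<close> \<epsilon>1 by (intro exI[of _ \<epsilon>1]) auto
  have P2: "\<exists>\<epsilon>>0. \<forall>s d. \<Theta>1 < s \<and> s < \<Theta>2 \<and> \<Theta>2 - \<epsilon> < s \<and> is_rprime F s d
      \<longrightarrow> p4 0 * u1fun F s d < 0"
    using \<open>0 < \<epsilon>2\<close> \<epsilon>2 by (intro exI[of _ \<epsilon>2]) auto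
  have nonzero: "w t / (rr F (\<theta> t))\<^sup>2 \<noteq> 0" if "\<Theta>1 < \<theta> t" "\<theta> t < \<Theta>2" for t
  proof -
    have "0 < (w t / (rr F (\<theta> t))\<^sup>2)\<^sup>2" using pos that theta_deriv_squared[of t] by simp
    then show ?thesis by auto
  qed
  note P34 = deriv_sign_at_endpoints[OF theta_deriv isCont_theta_deriv nonzero range[rule_format]]
  show ?thesis by (intro conjI P1 P2 P34[THEN conjunct1] P34[THEN conjunct2])
qed

end
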